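(* Let $n\ge2$, $\omega\in(0,1)$, and let $B_1,\dots,B_n$ be independent lognormal service times with $m_i=\mathbb E\ln B_i$, $s_i^2=\mathrm{Var}\ln B_i$, where $m_1\le\cdots\le m_n$ and $s_1^2\le\cdots\le s_n^2$; let $\mu_i=\mathbb EB_i$. Use the identity sequence with schedule $\boldsymbol x=(1+\alpha)\boldsymbol\mu$, where $\alpha=\frac1{\sqrt{2\omega}}\sqrt{\exp(s_{n-1}^2)-1}$. Then, with $Z$ standard normal and $Q_Z$ its quantile function, $$r_\omega=\frac{C(\mathrm{Id},\boldsymbol x,\omega)}{\min\{C(\tau,\boldsymbol y,\omega):\tau\in\mathsf S_n,\boldsymbol y\in\mathbb R_+^n\}}\le\frac{2\omega\alpha}{(1-\omega)\,\mathbb P(Z\ge Q_Z(1-\omega)-s_1)-\omega\,\mathbb P(Z\le Q_Z(1-\omega)-s_1)}.$$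
   Context: Appointment model: a sequence is a permutation $\tau\in\mathsf S_n$ of $\{1,\dots,n\}$, $\tau(i)$ being the patient in slot $i$. A schedule is $\boldsymbol y=(y_1,\dots,y_n)$, $y_j$ the interarrival time between patient $j$ and the next patient. Waiting and idle times: $W_1=I_1=0$, $W_{i+1}=(W_i+B_{\tau(i)}-y_{\tau(i)})^+$, $I_{i+1}=(W_i+B_{\tau(i)}-y_{\tau(i)})^-$, $a^+=\max\{0,a\}$, $a^-=\max\{0,-a\}$. Cost $C(\tau,\boldsymbol y,\omega)=\omega\sum_{i=1}^n\mathbb EI_i+(1-\omega)\sum_{i=1}^n\mathbb EW_i$. $\mathrm{Id}$ is the identity permutation. $Q_Z(y)=\inf\{x:y\le\mathbb P(Z\le x)\}$. *)

theory Defs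
  imports "HOL-Probability.Probability" "HOL-Combinatorics.Permutations"
begin

text \<open>Waiting times. b j is the realized service time of patient j, y j the interarrival
time after patient j, tau i the patient in slot i (slots 1..n).
wt tau y b k is W_(k+1), so wt ... 0 = W_1 = 0 and
W_(k+2) = (W_(k+1) + B_(tau(k+1)) - y_(tau(k+1)))^+.\<close>
fun wt :: "(nat \<Rightarrow> nat) \<Rightarrow> (nat \<Rightarrow> real) \<Rightarrow> (nat \<Rightarrow> real) \<Rightarrow> nat \<Rightarrow> real" where
  "wt tau y b 0 = 0"
| "wt tau y b (Suc k) = max 0 (wt tau y b k + b (tau (Suc k)) - y (tau (Suc k)))"

fun idl :: "(nat \<Rightarrow> nat) \<Rightarrow> (nat \<Rightarrow> real) \<Rightarrow> (nat \<Rightarrow> real) \<Rightarrow> nat \<Rightarrow> real" where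
  "idl tau y b 0 = 0"
| "idl tau y b (Suc k) = max 0 (- (wt tau y b k + b (tau (Suc k)) - y (tau (Suc k))))"

definition cost :: "'a measure \<Rightarrow> (nat \<Rightarrow> 'a \<Rightarrow> real) \<Rightarrow> nat \<Rightarrow> (nat \<Rightarrow> nat)
    \<Rightarrow> (nat \<Rightarrow> real) \<Rightarrow> real \<Rightarrow> real" where
  "cost M B n tau y w =
     w * (\<Sum>k<n. integral\<^sup>L M (\<lambda>x. idl tau y (\<lambda>j. B j x) k))
     + (1 - w) * (\<Sum>k<n. integral\<^sup>L M (\<lambda>x. wt tau y (\<lambda>j. B j x) k))"

definition lognormal :: "'a measure \<Rightarrow> ('a \<Rightarrow> real) \<Rightarrow> real \<Rightarrow> real \<Rightarrow> bool" where
  "lognormal M X m s \<longleftrightarrow> 0 < s \<and> X \<in> borel_measurable M \<and> (AE x in M. 0 < X x) \<and>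
     distributed M lborel (\<lambda>x. ln (X x)) (normal_density m s)"

definition std_normal :: "real measure" where
  "std_normal = density lborel std_normal_density"

definition QZ :: "real \<Rightarrow> real" where
  "QZ p = Inf {x. p \<le> measure std_normal {..x}}"

end

theory Submission
  imports Defs
begin

text \<open>Write \<open>\<mu>\<^sub>i = E B\<^sub>i\<close>, \<open>S = \<mu>\<^sub>1 + \<dots> + \<mu>\<^sub>n\<^sub>-\<^sub>1\<close>, \<open>\<Phi>\<close> for the standard normal distribution
  function and \<open>q = Q\<^sub>Z (1 - \<omega>) - s\<^sub>1\<close>. Both bounds are obtained slot by slot from one step of
  the Lindley recursion \<open>W' = (W + X - c)\<^sup>+\<close>, \<open>I' = (W + X - c)\<^sup>-\<close>, where the waiting time \<open>W\<close>
  is independent of the service time \<open>X\<close> of the patient in the slot.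

  Upper bound: for the identity sequence and \<open>c = (1 + \<alpha>) \<mu>\<close>, Kingman's second-moment argument
  bounds the cost of a slot by \<open>2 \<omega> \<alpha> \<mu>\<close> plus \<open>(E W\<^sup>2 - E W'\<^sup>2) / (2 \<alpha> \<mu>)\<close>; the choice of
  \<open>\<alpha>\<close> makes every variance at most \<open>2 \<omega> \<alpha>\<^sup>2 \<mu>\<^sup>2\<close>, and since the \<open>\<mu>\<^sub>i\<close> increase the second-moment
  terms telescope to something nonpositive. Hence the cost is at most \<open>2 \<omega> \<alpha> S\<close>.

  Lower bound: for any sequence and schedule, a critical-fractile (newsvendor) argument bounds
  the cost of a slot serving patient \<open>j\<close> from below by \<open>\<mu>\<^sub>j ((1 - \<omega>) - \<Phi> (Q\<^sub>Z (1 - \<omega>) - s\<^sub>j))\<close>, which is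
  at least \<open>\<mu>\<^sub>j ((1 - \<omega>) - \<Phi> q)\<close>. The patient in the last slot does not contribute, and
  \<open>\<mu>\<^sub>n\<close> is the largest mean, so every cost is at least \<open>((1 - \<omega>) - \<Phi> q) S\<close>, and
  \<open>(1 - \<omega>) - \<Phi> q\<close> is the denominator of the claimed bound.\<close>

section \<open>The standard normal distribution\<close>

abbreviation Phi :: "real \<Rightarrow> real" where
  "Phi \<equiv> cdf std_normal"

lemma real_distribution_std_normal: "real_distribution std_normal"
  unfolding std_normal_def real_distribution_def real_distribution_axioms_def
  by (simp add: prob_space_normal_density)

interpretation std_normal: real_distribution std_normal
  by (rule real_distribution_std_normal)

lemma null_sets_std_normal_iff:
  "A \<in> null_sets std_normal \<longleftrightarrow> A \<in> null_sets lborel"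
proof -
  have pos: "(x \<in> A \<longrightarrow> std_normal_density x = 0) \<longleftrightarrow> x \<notin> A" for x
    using normal_density_pos[of 1 0 x] by auto
  have "A \<in> null_sets std_normal \<longleftrightarrow> A \<in> sets lborel \<and> (AE x in lborel. x \<notin> A)"
    unfolding std_normal_def by (subst null_sets_density_iff) (auto simp: pos)
  also have "\<dots> \<longleftrightarrow> A \<in> null_sets lborel"
    using AE_iff_null_sets by blast
  finally show ?thesis .
qed

lemma null_sets_std_normal_singleton: "{x} \<in> null_sets std_normal"
  by (simp add: null_sets_std_normal_iff finite_imp_null_set_lborel)

lemma isCont_Phi: "isCont Phi x"
  by (simp add: std_normal.isCont_cdf measure_eq_0_null_sets null_sets_std_normal_singleton)

lemma strict_mono_Phi: "strict_mono Phi"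
proof (rule strict_monoI)
  fix a b :: real
  assume "a < b"
  have "{a<..b} \<notin> null_sets lborel"
    using \<open>a < b\<close> by (simp add: null_sets_def)
  then have "measure std_normal {a<..b} \<noteq> 0"
    using null_sets_std_normal_iff null_setsI[of std_normal "{a<..b}"]
    by (auto simp: std_normal.emeasure_eq_measure)
  then have "0 < measure std_normal {a<..b}"
    using measure_nonneg less_eq_real_def by metis
  then show "Phi a < Phi b"
    using std_normal.cdf_diff_eq[OF \<open>a < b\<close>] by simp
qed

lemma Phi_QZ:
  assumes "0 < p" "p < 1"
  shows "Phi (QZ p) = p"
proof -
  obtain a where a: "Phi a < p"
    using order_tendstoD(2)[OF std_normal.cdf_lim_at_bot \<open>0 < p\<close>]
    by (auto simp: eventually_at_bot_linorder)
  obtain b where b: "p < Phi b"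
    using order_tendstoD(1)[OF std_normal.cdf_lim_at_top_prob \<open>p < 1\<close>]
    by (auto simp: eventually_at_top_linorder)
  have "a \<le> b"
    using a b std_normal.cdf_nondecreasing[of b a] by linarith
  then obtain x where x: "Phi x = p"
    using IVT[of Phi a p b] a b isCont_Phi by auto
  have "{y. p \<le> Phi y} = {x..}"
    using strict_mono_less_eq[OF strict_mono_Phi] x by auto
  then have "QZ p = x"
    unfolding QZ_def by (simp add: cdf_def)
  with x show ?thesis by simp
qed

lemma Phi_QZ_diff_less:
  assumes "0 < s" "0 < p" "p < 1"
  shows "Phi (QZ p - s) < p"
  using strict_monoD[OF strict_mono_Phi, of "QZ p - s" "QZ p"] Phi_QZ[OF assms(2,3)] assms(1) by simp

lemma measure_std_normal_atLeast: "measure std_normal {q..} = 1 - Phi q"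
proof -
  have "measure std_normal {q..} = measure std_normal {q<..}"
    using AE_not_in[OF null_sets_std_normal_singleton[of q]]
    by (intro measure_eq_AE) auto
  also have "\<dots> = 1 - Phi q"
    using std_normal.prob_compl[of "{..q}"] by (simp add: cdf_def Compl_eq_Diff_UNIV[symmetric])
  finally show ?thesis .
qed

lemma Phi_eq_integral: "Phi a = (\<integral>x. std_normal_density x * indicator {..a} x \<partial>lborel)"
proof -
  have "Phi a = (\<integral>x. indicator {..a} x \<partial>std_normal)"
    by (simp add: cdf_def)
  also have "\<dots> = (\<integral>x. std_normal_density x * indicator {..a} x \<partial>lborel)"
    unfolding std_normal_def by (subst integral_density) auto
  finally show ?thesis .
qed

lemma normal_density_atMost_integral:
  assumes "0 < s"
  shows "(\<integral>u. normal_density m s u * indicator {..t} u \<partial>lborel) = Phi ((t - m) / s)"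
proof -
  have "(\<integral>u. normal_density m s u * indicator {..t} u \<partial>lborel)
      = s * (\<integral>x. normal_density m s (m + s * x) * indicator {..t} (m + s * x) \<partial>lborel)"
    using lborel_integral_real_affine[of s "\<lambda>u. normal_density m s u * indicator {..t} u" m] assms
    by simp
  also have "\<dots> = (\<integral>x. std_normal_density x * indicator {..(t - m) / s} x \<partial>lborel)"
  proof -
    have "s * normal_density m s (m + s * x) = std_normal_density x" for x
      using assms by (simp add: normal_density_def real_sqrt_mult power2_eq_square field_simps)
    moreover have "indicator {..t} (m + s * x) = (indicator {..(t - m) / s} x :: real)" for x
      using assms by (auto simp: indicator_def field_simps)
    ultimately show ?thesis
      by (simp add: integral_mult_right_zero[symmetric] mult.assoc[symmetric])
  qed
  finally show ?thesis
    by (simp add: Phi_eq_integral)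
qed

lemma normal_density_mult_exp:
  assumes "0 < s"
  shows "normal_density m s u * exp (c * u)
    = exp (c * m + c\<^sup>2 * s\<^sup>2 / 2) * normal_density (m + c * s\<^sup>2) s u"
proof -
  have "- (u - m)\<^sup>2 / (2 * s\<^sup>2) + c * u
      = (c * m + c\<^sup>2 * s\<^sup>2 / 2) + - (u - (m + c * s\<^sup>2))\<^sup>2 / (2 * s\<^sup>2)"
    using assms by (simp add: field_simps power2_eq_square)
  then show ?thesis
    unfolding normal_density_def by (simp add: exp_add[symmetric] ac_simps)
qed

section \<open>Lognormal moments\<close>

context prob_space
begin

lemma distributed_normal_exp_moment:
  assumes Y: "distributed M lborel Y (normal_density m s)" and s: "0 < s"
  shows "integrable M (\<lambda>x. exp (c * Y x))"
    and "expectation (\<lambda>x. exp (c * Y x)) = exp (c * m + c\<^sup>2 * s\<^sup>2 / 2)"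
proof -
  have tilt: "(\<lambda>u. normal_density m s u * exp (c * u))
      = (\<lambda>u. exp (c * m + c\<^sup>2 * s\<^sup>2 / 2) * normal_density (m + c * s\<^sup>2) s u)"
    using normal_density_mult_exp[OF s] by auto
  have "integrable lborel (\<lambda>u. normal_density m s u * exp (c * u))"
    unfolding tilt using integrable_normal_density[OF s] by simp
  then show "integrable M (\<lambda>x. exp (c * Y x))"
    using distributed_integrable[OF Y, of "\<lambda>u. exp (c * u)"] by simp
  have "(\<integral>u. normal_density m s u * exp (c * u) \<partial>lborel) = exp (c * m + c\<^sup>2 * s\<^sup>2 / 2)"
    unfolding tilt using integral_normal_density[OF s] by simp
  then show "expectation (\<lambda>x. exp (c * Y x)) = exp (c * m + c\<^sup>2 * s\<^sup>2 / 2)"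
    using distributed_integral[OF Y, of "\<lambda>u. exp (c * u)"] by simp
qed

lemma distributed_normal_truncated_exp_moment:
  assumes Y: "distributed M lborel Y (normal_density m s)" and s: "0 < s"
  shows "integrable M (\<lambda>x. exp (c * Y x) * indicator {..t} (Y x))"
    and "expectation (\<lambda>x. exp (c * Y x) * indicator {..t} (Y x))
      = exp (c * m + c\<^sup>2 * s\<^sup>2 / 2) * Phi ((t - m - c * s\<^sup>2) / s)"
proof -
  have tilt: "(\<lambda>u. normal_density m s u * (exp (c * u) * indicator {..t} u))
      = (\<lambda>u. exp (c * m + c\<^sup>2 * s\<^sup>2 / 2) * (normal_density (m + c * s\<^sup>2) s u * indicator {..t} u))"
    using normal_density_mult_exp[OF s] by (auto simp: mult.assoc[symmetric])
  have "integrable lborel (\<lambda>u. normal_density (m + c * s\<^sup>2) s u * indicator {..t} u)"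
    using integrable_real_mult_indicator[OF _ integrable_normal_density[OF s]] by simp
  then have "integrable lborel (\<lambda>u. normal_density m s u * (exp (c * u) * indicator {..t} u))"
    unfolding tilt by simp
  then show "integrable M (\<lambda>x. exp (c * Y x) * indicator {..t} (Y x))"
    using distributed_integrable[OF Y, of "\<lambda>u. exp (c * u) * indicator {..t} u"] by simp
  have "(\<integral>u. normal_density m s u * (exp (c * u) * indicator {..t} u) \<partial>lborel)
      = exp (c * m + c\<^sup>2 * s\<^sup>2 / 2) * Phi ((t - m - c * s\<^sup>2) / s)"
    unfolding tilt using normal_density_atMost_integral[OF s, of "m + c * s\<^sup>2" t]
    by (simp add: diff_diff_eq)
  then show "expectation (\<lambda>x. exp (c * Y x) * indicator {..t} (Y x))
      = exp (c * m + c\<^sup>2 * s\<^sup>2 / 2) * Phi ((t - m - c * s\<^sup>2) / s)"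
    using distributed_integral[OF Y, of "\<lambda>u. exp (c * u) * indicator {..t} u"] by simp
qed

lemma lognormal_moments:
  assumes "lognormal M X m s"
  shows "integrable M X" and "expectation X = exp (m + s\<^sup>2 / 2)"
    and "integrable M (\<lambda>x. (X x)\<^sup>2)" and "expectation (\<lambda>x. (X x)\<^sup>2) = exp (2 * m + 2 * s\<^sup>2)"
proof -
  have Y: "distributed M lborel (\<lambda>x. ln (X x)) (normal_density m s)" and s: "0 < s"
    and [measurable]: "X \<in> borel_measurable M"
    using assms by (auto simp: lognormal_def)
  have ae1: "AE x in M. exp (1 * ln (X x)) = X x"
    using assms by (auto simp: lognormal_def)
  have ae2: "AE x in M. exp (2 * ln (X x)) = (X x)\<^sup>2"
    using assms by (auto simp: lognormal_def exp_of_nat_mult[where n = 2, simplified])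
  show "integrable M X" "expectation X = exp (m + s\<^sup>2 / 2)"
    using integrable_cong_AE[OF _ _ ae1] integral_cong_AE[OF _ _ ae1]
      distributed_normal_exp_moment[OF Y s, of 1] by simp_all
  show "integrable M (\<lambda>x. (X x)\<^sup>2)" "expectation (\<lambda>x. (X x)\<^sup>2) = exp (2 * m + 2 * s\<^sup>2)"
    using integrable_cong_AE[OF _ _ ae2] integral_cong_AE[OF _ _ ae2]
      distributed_normal_exp_moment[OF Y s, of 2] by (simp_all add: power2_eq_square)
qed

lemma lognormal_variance:
  assumes "lognormal M X m s"
  shows "expectation (\<lambda>x. (X x)\<^sup>2) - (expectation X)\<^sup>2 = (expectation X)\<^sup>2 * (exp (s\<^sup>2) - 1)"
proof -
  have "exp (2 * m + 2 * s\<^sup>2) = (exp (m + s\<^sup>2 / 2))\<^sup>2 * exp (s\<^sup>2)"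
    by (simp add: power2_eq_square exp_add[symmetric])
  then show ?thesis
    using lognormal_moments[OF assms] by (simp add: algebra_simps)
qed

lemma lognormal_truncated_moments:
  assumes "lognormal M X m s"
  shows "integrable M (\<lambda>x. indicator {..m + s * z} (ln (X x)) :: real)"
    and "expectation (\<lambda>x. indicator {..m + s * z} (ln (X x)) :: real) = Phi z"
    and "integrable M (\<lambda>x. X x * indicator {..m + s * z} (ln (X x)))"
    and "expectation (\<lambda>x. X x * indicator {..m + s * z} (ln (X x))) = exp (m + s\<^sup>2 / 2) * Phi (z - s)"
proof -
  have Y: "distributed M lborel (\<lambda>x. ln (X x)) (normal_density m s)" and s: "0 < s"
    and [measurable]: "X \<in> borel_measurable M"
    using assms by (auto simp: lognormal_def)
  note trunc = distributed_normal_truncated_exp_moment[OF Y s, where t = "m + s * z"]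
  show "integrable M (\<lambda>x. indicator {..m + s * z} (ln (X x)) :: real)"
    "expectation (\<lambda>x. indicator {..m + s * z} (ln (X x)) :: real) = Phi z"
    using trunc[of 0] s by simp_all
  have ae: "AE x in M. exp (1 * ln (X x)) * indicator {..m + s * z} (ln (X x))
      = X x * indicator {..m + s * z} (ln (X x))"
    using assms by (auto simp: lognormal_def)
  have "(m + s * z - m - s\<^sup>2) / s = z - s"
    using s by (simp add: field_simps power2_eq_square)
  then show "integrable M (\<lambda>x. X x * indicator {..m + s * z} (ln (X x)))"
    "expectation (\<lambda>x. X x * indicator {..m + s * z} (ln (X x))) = exp (m + s\<^sup>2 / 2) * Phi (z - s)"
    using integrable_cong_AE[OF _ _ ae] integral_cong_AE[OF _ _ ae] trunc[of 1] by simp_all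
qed

end

section \<open>One step of the Lindley recursion\<close>

lemma newsvendor_pointwise_le:
  fixes w h u :: real
  assumes "0 \<le> w" "w \<le> 1" "h = 0 \<or> h = 1"
  shows "((1 - w) - h) * u \<le> w * max 0 (- u) + (1 - w) * max 0 u"
  using assms by (smt (verit) minus_mult_minus mult_le_0_iff split_mult_pos_le)

context prob_space
begin

lemma expectation_square_ge:
  fixes X :: "'a \<Rightarrow> real"
  assumes "integrable M X" "integrable M (\<lambda>x. (X x)\<^sup>2)"
  shows "(expectation X)\<^sup>2 \<le> expectation (\<lambda>x. (X x)\<^sup>2)"
proof -
  have "0 \<le> expectation (\<lambda>x. (X x - expectation X)\<^sup>2)"
    by (intro integral_nonneg_AE) simp
  then show ?thesis
    using variance_eq[OF assms] by simp
qed

lemma expectation_lindley_idle: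
  fixes W X :: "'a \<Rightarrow> real" and c :: real
  assumes W: "integrable M W" and X: "integrable M X"
  shows "expectation (\<lambda>x. max 0 (- (W x + X x - c)))
    = expectation (\<lambda>x. max 0 (W x + X x - c)) - expectation W + (c - expectation X)"
proof -
  have neg: "max 0 (- u) = max 0 u - u" for u :: real
    by (cases "0 \<le> u") auto
  have "(\<lambda>x. max 0 (- (W x + X x - c))) = (\<lambda>x. max 0 (W x + X x - c) - (W x + X x - c))"
    by (simp only: neg)
  then show ?thesis
    using W X by (simp add: prob_space)
qed

text \<open>Kingman's argument: square the Lindley recursion \<open>W' - I' = W + X - c\<close>, use
  \<open>W' I' = 0\<close>, independence of \<open>W\<close> and \<open>X\<close>, and \<open>(E I')\<^sup>2 \<le> E I'\<^sup>2\<close>.\<close>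
lemma lindley_kingman_bound:
  fixes W X :: "'a \<Rightarrow> real" and c :: real
  assumes W: "integrable M W" and W2: "integrable M (\<lambda>x. (W x)\<^sup>2)"
    and X: "integrable M X" and X2: "integrable M (\<lambda>x. (X x)\<^sup>2)"
    and ind: "indep_var borel W borel X"
  defines "W' \<equiv> \<lambda>x. max 0 (W x + X x - c)"
  shows "integrable M (\<lambda>x. (W' x)\<^sup>2)"
    and "2 * (c - expectation X) * expectation W'
      \<le> (expectation (\<lambda>x. (X x)\<^sup>2) - (expectation X)\<^sup>2)
        + expectation (\<lambda>x. (W x)\<^sup>2) - expectation (\<lambda>x. (W' x)\<^sup>2)"
proof -
  define I' where "I' = (\<lambda>x. max 0 (- (W x + X x - c)))"
  define U where "U x = W x + X x - c" for x
  have [measurable]: "W \<in> borel_measurable M" "X \<in> borel_measurable M"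
    using W X by auto
  have WX: "integrable M (\<lambda>x. W x * X x)" "expectation (\<lambda>x. W x * X x) = expectation W * expectation X"
    using indep_var_integrable[OF ind W X] indep_var_lebesgue_integral[OF ind W X] by auto
  have U2: "(\<lambda>x. (U x)\<^sup>2)
      = (\<lambda>x. (W x)\<^sup>2 + (X x)\<^sup>2 + 2 * (W x * X x) - 2 * c * W x - 2 * c * X x + c\<^sup>2)"
    by (auto simp: fun_eq_iff U_def power2_eq_square algebra_simps)
  have iU2: "integrable M (\<lambda>x. (U x)\<^sup>2)"
    unfolding U2 using W W2 X X2 WX by auto
  have EU2: "expectation (\<lambda>x. (U x)\<^sup>2) = expectation (\<lambda>x. (W x)\<^sup>2) + expectation (\<lambda>x. (X x)\<^sup>2)
      + 2 * (expectation W * expectation X) - 2 * c * expectation W - 2 * c * expectation X + c\<^sup>2"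
    unfolding U2 using W W2 X X2 WX by (simp add: prob_space)
  have bound: "integrable M (\<lambda>x. (f x)\<^sup>2)"
    if [measurable]: "f \<in> borel_measurable M" and "\<And>x. \<bar>f x\<bar> \<le> \<bar>U x\<bar>" for f
    using that(2) by (intro Bochner_Integration.integrable_bound[OF iU2]) (auto simp: abs_le_square_iff)
  show iW'2: "integrable M (\<lambda>x. (W' x)\<^sup>2)"
    by (rule bound) (auto simp: W'_def U_def)
  have iI'2: "integrable M (\<lambda>x. (I' x)\<^sup>2)"
    by (rule bound) (auto simp: I'_def U_def)
  have "(W' x)\<^sup>2 + (I' x)\<^sup>2 = (U x)\<^sup>2" for x
    by (cases "U x \<ge> 0") (auto simp: W'_def I'_def U_def power2_commute)
  then have E_split: "expectation (\<lambda>x. (W' x)\<^sup>2) + expectation (\<lambda>x. (I' x)\<^sup>2) = expectation (\<lambda>x. (U x)\<^sup>2)"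
    using Bochner_Integration.integral_add[OF iW'2 iI'2] by simp
  have EI': "expectation I' = expectation W' - expectation W + (c - expectation X)"
    unfolding I'_def W'_def by (rule expectation_lindley_idle[OF W X])
  have "(expectation I')\<^sup>2 \<le> expectation (\<lambda>x. (I' x)\<^sup>2)"
    using W X iI'2 by (intro expectation_square_ge) (auto simp: I'_def)
  then show "2 * (c - expectation X) * expectation W'
      \<le> (expectation (\<lambda>x. (X x)\<^sup>2) - (expectation X)\<^sup>2)
        + expectation (\<lambda>x. (W x)\<^sup>2) - expectation (\<lambda>x. (W' x)\<^sup>2)"
    unfolding EI' using E_split EU2 zero_le_power2[of "expectation W' - expectation W"]
    by (simp add: power2_eq_square algebra_simps)
qed

lemma lindley_slot_cost_le:
  fixes W X :: "'a \<Rightarrow> real" and w \<delta> :: real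
  assumes W: "integrable M W" and W2: "integrable M (\<lambda>x. (W x)\<^sup>2)"
    and X: "integrable M X" and X2: "integrable M (\<lambda>x. (X x)\<^sup>2)"
    and ind: "indep_var borel W borel X"
    and EW: "0 \<le> expectation W" and w: "0 \<le> w" and \<delta>: "0 < \<delta>"
    and var: "expectation (\<lambda>x. (X x)\<^sup>2) - (expectation X)\<^sup>2 \<le> 2 * w * \<delta>\<^sup>2"
  defines "c \<equiv> expectation X + \<delta>"
  shows "w * expectation (\<lambda>x. max 0 (- (W x + X x - c)))
      + (1 - w) * expectation (\<lambda>x. max 0 (W x + X x - c))
    \<le> 2 * w * \<delta> + (expectation (\<lambda>x. (W x)\<^sup>2) - expectation (\<lambda>x. (max 0 (W x + X x - c))\<^sup>2)) / (2 * \<delta>)"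
proof -
  let ?W' = "\<lambda>x. max 0 (W x + X x - c)"
  have "2 * \<delta> * expectation ?W'
      \<le> 2 * w * \<delta>\<^sup>2 + expectation (\<lambda>x. (W x)\<^sup>2) - expectation (\<lambda>x. (?W' x)\<^sup>2)"
    using lindley_kingman_bound(2)[OF W W2 X X2 ind, of c] var by (simp add: c_def)
  then have EW': "expectation ?W'
      \<le> w * \<delta> + (expectation (\<lambda>x. (W x)\<^sup>2) - expectation (\<lambda>x. (?W' x)\<^sup>2)) / (2 * \<delta>)"
    using \<delta> by (simp add: field_simps power2_eq_square)
  have EI': "expectation (\<lambda>x. max 0 (- (W x + X x - c))) = expectation ?W' - expectation W + \<delta>"
    using expectation_lindley_idle[OF W X, of c] by (simp add: c_def)
  have "w * expectation (\<lambda>x. max 0 (- (W x + X x - c))) + (1 - w) * expectation ?W'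
      = expectation ?W' - w * expectation W + w * \<delta>"
    unfolding EI' by (simp add: algebra_simps)
  moreover have "0 \<le> w * expectation W"
    using EW w by simp
  ultimately show ?thesis
    using EW' by linarith
qed

text \<open>Apply the pointwise newsvendor bound with \<open>h = 1{ln X \<le> m + s z}\<close>, \<open>z = Q\<^sub>Z (1 - w)\<close>:
  since \<open>E h = 1 - w\<close> and \<open>h\<close> is independent of \<open>W\<close>, the contributions of \<open>W\<close> and \<open>y\<close> to
  \<open>E[((1 - w) - h) (W + X - y)]\<close> cancel, leaving \<open>E[((1 - w) - h) X]\<close>.\<close>
lemma lindley_slot_cost_ge:
  fixes W X :: "'a \<Rightarrow> real" and w y :: real
  assumes L: "lognormal M X m s" and W: "integrable M W" and ind: "indep_var borel W borel X"
    and w: "0 < w" "w < 1"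
  shows "exp (m + s\<^sup>2 / 2) * ((1 - w) - Phi (QZ (1 - w) - s))
    \<le> w * expectation (\<lambda>x. max 0 (- (W x + X x - y))) + (1 - w) * expectation (\<lambda>x. max 0 (W x + X x - y))"
proof -
  define z where "z = QZ (1 - w)"
  define h where "h x = (indicator {..m + s * z} (ln (X x)) :: real)" for x
  have [measurable]: "X \<in> borel_measurable M" "W \<in> borel_measurable M"
    using L W by (auto simp: lognormal_def)
  have X: "integrable M X" "expectation X = exp (m + s\<^sup>2 / 2)"
    using lognormal_moments[OF L] by auto
  have h: "integrable M h" "expectation h = 1 - w"
    using lognormal_truncated_moments(1,2)[OF L, of z] Phi_QZ[of "1 - w"] w
    by (simp_all add: h_def[abs_def] z_def)
  have Xh: "integrable M (\<lambda>x. X x * h x)" "expectation (\<lambda>x. X x * h x) = exp (m + s\<^sup>2 / 2) * Phi (z - s)"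
    using lognormal_truncated_moments(3,4)[OF L, of z] by (simp_all add: h_def)
  have "indep_var borel (id \<circ> W) borel ((\<lambda>u. indicator {..m + s * z} (ln u) :: real) \<circ> X)"
    by (rule indep_var_compose[OF ind]) auto
  then have "indep_var borel W borel h"
    by (simp add: comp_def h_def[abs_def])
  then have Wh: "integrable M (\<lambda>x. W x * h x)" "expectation (\<lambda>x. W x * h x) = expectation W * (1 - w)"
    using indep_var_integrable[OF _ W h(1)] indep_var_lebesgue_integral[OF _ W h(1)] h(2) by auto
  define R where "R x = ((1 - w) - h x) * (W x + X x - y)" for x
  have R_eq: "R = (\<lambda>x. (1 - w) * (W x + X x - y) - (W x * h x + X x * h x - y * h x))"
    by (auto simp: fun_eq_iff R_def algebra_simps)
  have "expectation R = (1 - w) * (expectation W + expectation X - y)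
      - (expectation (\<lambda>x. W x * h x) + expectation (\<lambda>x. X x * h x) - y * expectation h)"
    unfolding R_eq using W X h Xh Wh by (simp add: prob_space)
  also have "\<dots> = exp (m + s\<^sup>2 / 2) * ((1 - w) - Phi (z - s))"
    by (simp add: X(2) h(2) Xh(2) Wh(2) algebra_simps)
  finally have "exp (m + s\<^sup>2 / 2) * ((1 - w) - Phi (z - s)) = expectation R" ..
  also have "\<dots> \<le> expectation (\<lambda>x. w * max 0 (- (W x + X x - y)) + (1 - w) * max 0 (W x + X x - y))"
  proof (rule integral_mono)
    show "integrable M R"
      unfolding R_eq using W X h Xh Wh by auto
    show "integrable M (\<lambda>x. w * max 0 (- (W x + X x - y)) + (1 - w) * max 0 (W x + X x - y))"
      using W X by auto
    show "R x \<le> w * max 0 (- (W x + X x - y)) + (1 - w) * max 0 (W x + X x - y)" for x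
      unfolding R_def using w by (intro newsvendor_pointwise_le) (auto simp: h_def indicator_def)
  qed
  also have "\<dots> = w * expectation (\<lambda>x. max 0 (- (W x + X x - y))) + (1 - w) * expectation (\<lambda>x. max 0 (W x + X x - y))"
    using W X by simp
  finally show ?thesis
    by (simp add: z_def)
qed

end

section \<open>Waiting and idle times of a schedule\<close>

lemma wt_nonneg: "0 \<le> wt tau y b k"
  by (cases k) auto

lemma wt_cong:
  "(\<And>i. i \<in> {1..k} \<Longrightarrow> b (tau i) = b' (tau i)) \<Longrightarrow> wt tau y b k = wt tau y b' k"
  by (induction k) auto

lemma measurable_wt_PiM:
  assumes "tau ` {1..k} \<subseteq> A"
  shows "(\<lambda>b. wt tau y b k) \<in> borel_measurable (PiM A (\<lambda>_. borel))"
  using assms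
proof (induction k)
  case (Suc k)
  have "tau ` {1..k} \<subseteq> A" "tau (Suc k) \<in> A"
    using Suc.prems by auto
  with Suc.IH have [measurable]: "(\<lambda>b. wt tau y b k) \<in> borel_measurable (PiM A (\<lambda>_. borel))"
    by simp
  from \<open>tau (Suc k) \<in> A\<close> have [measurable]: "(\<lambda>b. b (tau (Suc k))) \<in> borel_measurable (PiM A (\<lambda>_. borel))"
    by (rule measurable_component_singleton)
  show ?case by simp
qed simp

lemma inj_on_image_atLeastAtMost_SucD:
  assumes "inj_on tau {1..Suc k}" "tau ` {1..Suc k} \<subseteq> I"
  shows "inj_on tau {1..k}" "tau ` {1..k} \<subseteq> I" "tau (Suc k) \<in> I" "tau (Suc k) \<notin> tau ` {1..k}"
  using assms inj_on_image_mem_iff[OF assms(1), of "Suc k" "{1..k}"] by (auto intro: inj_on_subset)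

lemma cost_Suc_eq_sum_slots:
  "cost M B (Suc N) tau y w = (\<Sum>k<N. w * (\<integral>x. idl tau y (\<lambda>j. B j x) (Suc k) \<partial>M)
      + (1 - w) * (\<integral>x. wt tau y (\<lambda>j. B j x) (Suc k) \<partial>M))"
  unfolding cost_def sum.lessThan_Suc_shift
  by (simp add: sum.distrib sum_distrib_left del: wt.simps(2) idl.simps(2))

context prob_space
begin

lemma integrable_wt:
  assumes "\<And>i. i \<in> {1..k} \<Longrightarrow> integrable M (B (tau i))"
  shows "integrable M (\<lambda>x. wt tau y (\<lambda>j. B j x) k)"
  using assms by (induction k) auto

lemma indep_var_wt:
  assumes ind: "indep_vars (\<lambda>_. borel) B I" and sub: "tau ` {1..k} \<subseteq> I"
    and j: "j \<in> I" "j \<notin> tau ` {1..k}"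
  shows "indep_var borel (\<lambda>x. wt tau y (\<lambda>i. B i x) k) borel (B j)"
proof -
  have "indep_var (PiM (tau ` {1..k}) (\<lambda>_. borel)) (\<lambda>x. restrict (\<lambda>i. B i x) (tau ` {1..k}))
      (PiM {j} (\<lambda>_. borel)) (\<lambda>x. restrict (\<lambda>i. B i x) {j})"
    using sub j by (intro indep_var_restrict[OF ind]) auto
  then have "indep_var borel ((\<lambda>b. wt tau y b k) \<circ> (\<lambda>x. restrict (\<lambda>i. B i x) (tau ` {1..k})))
      borel ((\<lambda>b. b j) \<circ> (\<lambda>x. restrict (\<lambda>i. B i x) {j}))"
    by (rule indep_var_compose) (auto intro: measurable_wt_PiM measurable_component_singleton)
  also have "(\<lambda>b. wt tau y b k) \<circ> (\<lambda>x. restrict (\<lambda>i. B i x) (tau ` {1..k}))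
      = (\<lambda>x. wt tau y (\<lambda>i. B i x) k)"
    by (auto simp: fun_eq_iff intro!: wt_cong)
  also have "(\<lambda>b. b j) \<circ> (\<lambda>x. restrict (\<lambda>i. B i x) {j}) = B j"
    by (auto simp: fun_eq_iff)
  finally show ?thesis .
qed

lemma integrable_wt_square:
  assumes ind: "indep_vars (\<lambda>_. borel) B I"
    and tau: "inj_on tau {1..k}" "tau ` {1..k} \<subseteq> I"
    and B: "\<And>i. i \<in> I \<Longrightarrow> integrable M (B i)" "\<And>i. i \<in> I \<Longrightarrow> integrable M (\<lambda>x. (B i x)\<^sup>2)"
  shows "integrable M (\<lambda>x. (wt tau y (\<lambda>i. B i x) k)\<^sup>2)"
  using tau
proof (induction k)
  case (Suc k)
  note k = inj_on_image_atLeastAtMost_SucD[OF Suc.prems]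
  then have "integrable M (\<lambda>x. wt tau y (\<lambda>i. B i x) k)"
    using B(1) by (intro integrable_wt) (auto simp: image_subset_iff)
  from lindley_kingman_bound(1)[OF this Suc.IH[OF k(1,2)] B(1,2)[OF k(3)] indep_var_wt[OF ind k(2-4)]]
  show ?case
    by simp
qed simp

lemma slot_cost_le:
  fixes B :: "nat \<Rightarrow> 'a \<Rightarrow> real" and w \<delta> :: real
  assumes ind: "indep_vars (\<lambda>_. borel) B I"
    and tau: "inj_on tau {1..Suc k}" "tau ` {1..Suc k} \<subseteq> I"
    and B: "\<And>i. i \<in> I \<Longrightarrow> integrable M (B i)" "\<And>i. i \<in> I \<Longrightarrow> integrable M (\<lambda>x. (B i x)\<^sup>2)"
    and w: "0 \<le> w" and \<delta>: "0 < \<delta>"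
    and y: "y (tau (Suc k)) = expectation (B (tau (Suc k))) + \<delta>"
    and var: "expectation (\<lambda>x. (B (tau (Suc k)) x)\<^sup>2) - (expectation (B (tau (Suc k))))\<^sup>2 \<le> 2 * w * \<delta>\<^sup>2"
  shows "w * (\<integral>x. idl tau y (\<lambda>i. B i x) (Suc k) \<partial>M) + (1 - w) * (\<integral>x. wt tau y (\<lambda>i. B i x) (Suc k) \<partial>M)
    \<le> 2 * w * \<delta> + ((\<integral>x. (wt tau y (\<lambda>i. B i x) k)\<^sup>2 \<partial>M) - (\<integral>x. (wt tau y (\<lambda>i. B i x) (Suc k))\<^sup>2 \<partial>M)) / (2 * \<delta>)"
proof -
  note k = inj_on_image_atLeastAtMost_SucD[OF tau]
  have "integrable M (\<lambda>x. wt tau y (\<lambda>i. B i x) k)"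
    using k(2) B(1) by (intro integrable_wt) (auto simp: image_subset_iff)
  moreover have "0 \<le> expectation (\<lambda>x. wt tau y (\<lambda>i. B i x) k)"
    by (intro integral_nonneg_AE) (simp add: wt_nonneg)
  ultimately show ?thesis
    using lindley_slot_cost_le[OF _ integrable_wt_square[OF ind k(1,2) B] B(1,2)[OF k(3)]
        indep_var_wt[OF ind k(2-4)] _ w \<delta> var]
    by (simp add: y)
qed

lemma slot_cost_lognormal_ge:
  fixes B :: "nat \<Rightarrow> 'a \<Rightarrow> real" and m s :: "nat \<Rightarrow> real" and w :: real
  assumes ind: "indep_vars (\<lambda>_. borel) B I"
    and tau: "inj_on tau {1..Suc k}" "tau ` {1..Suc k} \<subseteq> I"
    and L: "\<And>i. i \<in> I \<Longrightarrow> lognormal M (B i) (m i) (s i)"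
    and w: "0 < w" "w < 1"
  defines "j \<equiv> tau (Suc k)"
  shows "exp (m j + (s j)\<^sup>2 / 2) * ((1 - w) - Phi (QZ (1 - w) - s j))
    \<le> w * (\<integral>x. idl tau y (\<lambda>i. B i x) (Suc k) \<partial>M) + (1 - w) * (\<integral>x. wt tau y (\<lambda>i. B i x) (Suc k) \<partial>M)"
proof -
  note k = inj_on_image_atLeastAtMost_SucD[OF tau]
  have "integrable M (\<lambda>x. wt tau y (\<lambda>i. B i x) k)"
    using k(2) lognormal_moments(1)[OF L] by (intro integrable_wt) (auto simp: image_subset_iff)
  from lindley_slot_cost_ge[OF L[OF k(3)] this indep_var_wt[OF ind k(2-4)] w, of "y j"] show ?thesis
    by (simp add: j_def)
qed

end

section \<open>Bounds on the cost\<close>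

lemma sum_telescope_divide_le_0:
  fixes e d :: "nat \<Rightarrow> real"
  assumes e: "e 0 = 0" "\<And>k. 0 \<le> e k"
    and d: "\<And>k. 0 < k \<Longrightarrow> k \<le> N \<Longrightarrow> 0 < d k" "\<And>k. 0 < k \<Longrightarrow> k < N \<Longrightarrow> d k \<le> d (Suc k)"
  shows "(\<Sum>k<N. (e k - e (Suc k)) / d (Suc k)) \<le> 0"
proof -
  have "(\<Sum>k<n. (e k - e (Suc k)) / d (Suc k)) \<le> - e n / d n" if "n \<le> N" for n
    using that
  proof (induction n)
    case 0
    then show ?case by (simp add: e(1))
  next
    case (Suc n)
    have "e n / d (Suc n) \<le> e n / d n"
    proof (cases n)
      case (Suc n')
      then show ?thesis
        using Suc.prems d e(2)[of n] by (intro divide_left_mono) auto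
    qed (simp add: e(1))
    with Suc show ?case
      by (simp add: diff_divide_distrib)
  qed
  moreover have "0 \<le> e N / d N"
    using e d(1)[of N] by (cases "N = 0") auto
  ultimately show ?thesis
    by fastforce
qed

lemma sum_permutes_drop_last_ge:
  fixes g :: "nat \<Rightarrow> real"
  assumes tau: "tau permutes {1..Suc N}" and g: "\<And>i. i \<in> {1..Suc N} \<Longrightarrow> g i \<le> g (Suc N)"
  shows "(\<Sum>k<N. g (Suc k)) \<le> (\<Sum>k<N. g (tau (Suc k)))"
proof -
  have shift: "(\<Sum>i\<in>{1..Suc N}. f i) = (\<Sum>k<N. f (Suc k)) + f (Suc N)" for f :: "nat \<Rightarrow> real"
    by (simp add: sum.atLeast1_atMost_eq)
  have "(\<Sum>i\<in>{1..Suc N}. g (tau i)) = (\<Sum>i\<in>{1..Suc N}. g i)"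
    using sum.permute[OF tau, of g] by simp
  moreover have "g (tau (Suc N)) \<le> g (Suc N)"
    using g permutes_in_image[OF tau] by auto
  ultimately show ?thesis
    unfolding shift by linarith
qed

lemma divide_le_divide_of_bounds:
  fixes u L K D S :: real
  assumes "u \<le> K * S" "D * S \<le> L" "0 < D" "0 < S" "0 \<le> K"
  shows "u / L \<le> K / D"
proof -
  have "0 < L"
    using assms(2-4) by (smt (verit) mult_pos_pos)
  have "u * D \<le> K * S * D"
    using assms(1,3) by (simp add: mult_right_mono)
  also have "\<dots> = K * (D * S)"
    by (simp add: ac_simps)
  also have "\<dots> \<le> K * L"
    using assms(2,5) by (rule mult_left_mono)
  finally show ?thesis
    using \<open>0 < L\<close> \<open>0 < D\<close> by (simp add: divide_simps)
qed

context prob_space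
begin

lemma cost_id_padded_mean_le:
  fixes B :: "nat \<Rightarrow> 'a \<Rightarrow> real" and \<alpha> w :: real
  assumes ind: "indep_vars (\<lambda>_. borel) B {1..Suc N}"
    and B: "\<And>i. i \<in> {1..Suc N} \<Longrightarrow> integrable M (B i)"
      "\<And>i. i \<in> {1..Suc N} \<Longrightarrow> integrable M (\<lambda>x. (B i x)\<^sup>2)"
    and pos: "\<And>i. i \<in> {1..N} \<Longrightarrow> 0 < expectation (B i)"
    and mono: "\<And>i. 0 < i \<Longrightarrow> i < N \<Longrightarrow> expectation (B i) \<le> expectation (B (Suc i))"
    and var: "\<And>i. i \<in> {1..N} \<Longrightarrow>
      expectation (\<lambda>x. (B i x)\<^sup>2) - (expectation (B i))\<^sup>2 \<le> 2 * w * \<alpha>\<^sup>2 * (expectation (B i))\<^sup>2"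
    and \<alpha>: "0 < \<alpha>" and w: "0 \<le> w"
  shows "cost M B (Suc N) id (\<lambda>i. (1 + \<alpha>) * expectation (B i)) w
    \<le> 2 * w * \<alpha> * (\<Sum>k<N. expectation (B (Suc k)))"
proof -
  define \<mu> where "\<mu> i = expectation (B i)" for i
  define x where "x = (\<lambda>i. (1 + \<alpha>) * \<mu> i)"
  define e where "e k = expectation (\<lambda>z. (wt id x (\<lambda>j. B j z) k)\<^sup>2)" for k
  have slot: "w * (\<integral>z. idl id x (\<lambda>j. B j z) (Suc k) \<partial>M) + (1 - w) * (\<integral>z. wt id x (\<lambda>j. B j z) (Suc k) \<partial>M)
      \<le> 2 * w * \<alpha> * \<mu> (Suc k) + (e k - e (Suc k)) / (2 * (\<alpha> * \<mu> (Suc k)))"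
    if "k < N" for k
  proof -
    have k: "Suc k \<in> {1..N}"
      using that by auto
    have "expectation (\<lambda>z. (B (Suc k) z)\<^sup>2) - (\<mu> (Suc k))\<^sup>2 \<le> 2 * w * (\<alpha> * \<mu> (Suc k))\<^sup>2"
      using var[OF k] by (simp add: \<mu>_def power_mult_distrib)
    moreover have "0 < \<alpha> * \<mu> (Suc k)"
      using \<alpha> pos[OF k] by (simp add: \<mu>_def)
    ultimately show ?thesis
      using slot_cost_le[OF ind _ _ B w, of id k "\<alpha> * \<mu> (Suc k)" x] that
      by (simp add: e_def x_def \<mu>_def algebra_simps)
  qed
  have "cost M B (Suc N) id x w
      \<le> (\<Sum>k<N. 2 * w * \<alpha> * \<mu> (Suc k) + (e k - e (Suc k)) / (2 * (\<alpha> * \<mu> (Suc k))))"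
    unfolding cost_Suc_eq_sum_slots by (intro sum_mono slot) simp
  also have "\<dots> = 2 * w * \<alpha> * (\<Sum>k<N. \<mu> (Suc k)) + (\<Sum>k<N. (e k - e (Suc k)) / (2 * (\<alpha> * \<mu> (Suc k))))"
    by (simp add: sum.distrib sum_distrib_left)
  also have "(\<Sum>k<N. (e k - e (Suc k)) / (2 * (\<alpha> * \<mu> (Suc k)))) \<le> 0"
  proof (rule sum_telescope_divide_le_0)
    show "e 0 = 0" "\<And>k. 0 \<le> e k"
      unfolding e_def by (auto intro: integral_nonneg_AE)
    show "\<And>k. 0 < k \<Longrightarrow> k \<le> N \<Longrightarrow> 0 < 2 * (\<alpha> * \<mu> k)"
      using \<alpha> pos by (simp add: \<mu>_def)
    show "\<And>k. 0 < k \<Longrightarrow> k < N \<Longrightarrow> 2 * (\<alpha> * \<mu> k) \<le> 2 * (\<alpha> * \<mu> (Suc k))"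
      using \<alpha> mono by (simp add: \<mu>_def)
  qed
  finally show ?thesis
    by (simp add: x_def \<mu>_def)
qed

lemma cost_id_lognormal_le:
  fixes B :: "nat \<Rightarrow> 'a \<Rightarrow> real" and m s :: "nat \<Rightarrow> real" and w :: real
  assumes ind: "indep_vars (\<lambda>_. borel) B {1..Suc N}"
    and L: "\<And>i. i \<in> {1..Suc N} \<Longrightarrow> lognormal M (B i) (m i) (s i)"
    and m_mono: "\<And>i j. 1 \<le> i \<Longrightarrow> i \<le> j \<Longrightarrow> j \<le> Suc N \<Longrightarrow> m i \<le> m j"
    and s_mono: "\<And>i j. 1 \<le> i \<Longrightarrow> i \<le> j \<Longrightarrow> j \<le> Suc N \<Longrightarrow> (s i)\<^sup>2 \<le> (s j)\<^sup>2"
    and N: "0 < N" and w: "0 < w"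
  defines "\<alpha> \<equiv> 1 / sqrt (2 * w) * sqrt (exp ((s N)\<^sup>2) - 1)"
  shows "cost M B (Suc N) id (\<lambda>i. (1 + \<alpha>) * expectation (B i)) w
    \<le> 2 * w * \<alpha> * (\<Sum>k<N. exp (m (Suc k) + (s (Suc k))\<^sup>2 / 2))"
proof -
  have EB: "expectation (B i) = exp (m i + (s i)\<^sup>2 / 2)" if "i \<in> {1..Suc N}" for i
    using lognormal_moments(2)[OF L[OF that]] .
  have "0 < s N"
    using L[of N] N by (simp add: lognormal_def)
  then have "1 < exp ((s N)\<^sup>2)"
    by simp
  then have \<alpha>: "0 < \<alpha>" "2 * w * \<alpha>\<^sup>2 = exp ((s N)\<^sup>2) - 1"
    unfolding \<alpha>_def using w by (simp_all add: power_mult_distrib power_divide)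
  have "cost M B (Suc N) id (\<lambda>i. (1 + \<alpha>) * expectation (B i)) w
      \<le> 2 * w * \<alpha> * (\<Sum>k<N. expectation (B (Suc k)))"
  proof (rule cost_id_padded_mean_le[OF ind _ _ _ _ _ \<alpha>(1) less_imp_le[OF w]])
    show "integrable M (B i)" "integrable M (\<lambda>x. (B i x)\<^sup>2)" if "i \<in> {1..Suc N}" for i
      using lognormal_moments(1,3)[OF L[OF that]] by simp_all
    show "0 < expectation (B i)" if "i \<in> {1..N}" for i
      using that by (simp add: EB)
    show "expectation (B i) \<le> expectation (B (Suc i))" if "0 < i" "i < N" for i
      using that m_mono[of i "Suc i"] s_mono[of i "Suc i"] by (simp add: EB)
    show "expectation (\<lambda>x. (B i x)\<^sup>2) - (expectation (B i))\<^sup>2 \<le> 2 * w * \<alpha>\<^sup>2 * (expectation (B i))\<^sup>2"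
      if "i \<in> {1..N}" for i
    proof -
      have "exp ((s i)\<^sup>2) - 1 \<le> 2 * w * \<alpha>\<^sup>2"
        using that s_mono[of i N] \<alpha>(2) by simp
      then show ?thesis
        using that lognormal_variance[OF L] by (simp add: mult_left_mono mult.commute)
    qed
  qed
  then show ?thesis
    by (simp add: EB)
qed

lemma cost_lognormal_ge:
  fixes B :: "nat \<Rightarrow> 'a \<Rightarrow> real" and m s :: "nat \<Rightarrow> real" and w :: real
  assumes ind: "indep_vars (\<lambda>_. borel) B {1..Suc N}"
    and L: "\<And>i. i \<in> {1..Suc N} \<Longrightarrow> lognormal M (B i) (m i) (s i)"
    and m_mono: "\<And>i j. 1 \<le> i \<Longrightarrow> i \<le> j \<Longrightarrow> j \<le> Suc N \<Longrightarrow> m i \<le> m j"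
    and s_mono: "\<And>i j. 1 \<le> i \<Longrightarrow> i \<le> j \<Longrightarrow> j \<le> Suc N \<Longrightarrow> (s i)\<^sup>2 \<le> (s j)\<^sup>2"
    and tau: "tau permutes {1..Suc N}" and w: "0 < w" "w < 1"
  shows "((1 - w) - Phi (QZ (1 - w) - s 1)) * (\<Sum>k<N. exp (m (Suc k) + (s (Suc k))\<^sup>2 / 2))
    \<le> cost M B (Suc N) tau y w"
proof -
  define \<mu> where "\<mu> i = exp (m i + (s i)\<^sup>2 / 2)" for i
  define D where "D = (1 - w) - Phi (QZ (1 - w) - s 1)"
  have s_pos: "0 < s i" if "i \<in> {1..Suc N}" for i
    using L[OF that] by (simp add: lognormal_def)
  then have "0 \<le> D"
    unfolding D_def using Phi_QZ_diff_less[of "s 1" "1 - w"] w by simp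
  have D_le: "D * \<mu> j \<le> \<mu> j * ((1 - w) - Phi (QZ (1 - w) - s j))" if "j \<in> {1..Suc N}" for j
  proof -
    have "s 1 \<le> s j"
      using s_mono[of 1 j] that s_pos[of 1] s_pos[OF that] by (simp add: power2_le_iff_abs_le)
    then have "Phi (QZ (1 - w) - s j) \<le> Phi (QZ (1 - w) - s 1)"
      by (intro std_normal.cdf_nondecreasing) simp
    then show ?thesis
      by (simp add: D_def \<mu>_def algebra_simps)
  qed
  have slot: "D * \<mu> (tau (Suc k))
      \<le> w * (\<integral>x. idl tau y (\<lambda>j. B j x) (Suc k) \<partial>M) + (1 - w) * (\<integral>x. wt tau y (\<lambda>j. B j x) (Suc k) \<partial>M)"
    if "k < N" for k
  proof -
    have "tau (Suc k) \<in> {1..Suc N}"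
      using permutes_in_image[OF tau] that by simp
    then have "D * \<mu> (tau (Suc k)) \<le> \<mu> (tau (Suc k)) * ((1 - w) - Phi (QZ (1 - w) - s (tau (Suc k))))"
      by (rule D_le)
    also have "\<dots> \<le> w * (\<integral>x. idl tau y (\<lambda>j. B j x) (Suc k) \<partial>M) + (1 - w) * (\<integral>x. wt tau y (\<lambda>j. B j x) (Suc k) \<partial>M)"
    proof -
      have "tau ` {1..Suc k} \<subseteq> {1..Suc N}"
        using permutes_image[OF tau] that by auto
      with ind permutes_inj_on[OF tau] show ?thesis
        unfolding \<mu>_def using L w by (rule slot_cost_lognormal_ge)
    qed
    finally show ?thesis .
  qed
  have "\<mu> i \<le> \<mu> (Suc N)" if "i \<in> {1..Suc N}" for i
    using that m_mono[of i "Suc N"] s_mono[of i "Suc N"] by (simp add: \<mu>_def)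
  then have "D * (\<Sum>k<N. \<mu> (Suc k)) \<le> D * (\<Sum>k<N. \<mu> (tau (Suc k)))"
    using \<open>0 \<le> D\<close> sum_permutes_drop_last_ge[OF tau] by (simp add: mult_left_mono)
  also have "\<dots> \<le> cost M B (Suc N) tau y w"
    unfolding cost_Suc_eq_sum_slots sum_distrib_left by (intro sum_mono slot) simp
  finally show ?thesis
    by (simp add: D_def \<mu>_def)
qed

lemma INF_cost_lognormal_ge:
  fixes B :: "nat \<Rightarrow> 'a \<Rightarrow> real" and m s :: "nat \<Rightarrow> real" and w :: real
  assumes ind: "indep_vars (\<lambda>_. borel) B {1..Suc N}"
    and L: "\<And>i. i \<in> {1..Suc N} \<Longrightarrow> lognormal M (B i) (m i) (s i)"
    and m_mono: "\<And>i j. 1 \<le> i \<Longrightarrow> i \<le> j \<Longrightarrow> j \<le> Suc N \<Longrightarrow> m i \<le> m j"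
    and s_mono: "\<And>i j. 1 \<le> i \<Longrightarrow> i \<le> j \<Longrightarrow> j \<le> Suc N \<Longrightarrow> (s i)\<^sup>2 \<le> (s j)\<^sup>2"
    and w: "0 < w" "w < 1"
  shows "((1 - w) - Phi (QZ (1 - w) - s 1)) * (\<Sum>k<N. exp (m (Suc k) + (s (Suc k))\<^sup>2 / 2))
    \<le> (INF (\<tau>, y) \<in> {(\<tau>, y). \<tau> permutes {1..Suc N} \<and> (\<forall>j\<in>{1..Suc N}. 0 \<le> y j)}. cost M B (Suc N) \<tau> y w)"
proof (rule cINF_greatest)
  show "{(\<tau>, y). \<tau> permutes {1..Suc N} \<and> (\<forall>j\<in>{1..Suc N}. 0 \<le> (y :: nat \<Rightarrow> real) j)} \<noteq> {}"
    using permutes_id by blast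
  fix p :: "(nat \<Rightarrow> nat) \<times> (nat \<Rightarrow> real)"
  assume "p \<in> {(\<tau>, y). \<tau> permutes {1..Suc N} \<and> (\<forall>j\<in>{1..Suc N}. 0 \<le> y j)}"
  then obtain \<tau> y where "p = (\<tau>, y)" and "\<tau> permutes {1..Suc N}"
    by blast
  with cost_lognormal_ge[OF ind L m_mono s_mono _ w] show
    "((1 - w) - Phi (QZ (1 - w) - s 1)) * (\<Sum>k<N. exp (m (Suc k) + (s (Suc k))\<^sup>2 / 2))
      \<le> (case p of (\<tau>, y) \<Rightarrow> cost M B (Suc N) \<tau> y w)"
    by simp
qed

end

theorem theorem5p2:
  fixes M :: "'a measure" and B :: "nat \<Rightarrow> 'a \<Rightarrow> real"
    and m s :: "nat \<Rightarrow> real" and n :: nat and \<omega> :: real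
  assumes "prob_space M"
    and "n \<ge> 2"
    and "0 < \<omega>" and "\<omega> < 1"
    and "prob_space.indep_vars M (\<lambda>_. borel) B {1..n}"
    and "\<And>i. i \<in> {1..n} \<Longrightarrow> lognormal M (B i) (m i) (s i)"
    and "\<And>i j. 1 \<le> i \<Longrightarrow> i \<le> j \<Longrightarrow> j \<le> n \<Longrightarrow> m i \<le> m j"
    and "\<And>i j. 1 \<le> i \<Longrightarrow> i \<le> j \<Longrightarrow> j \<le> n \<Longrightarrow> (s i)\<^sup>2 \<le> (s j)\<^sup>2"
  shows
    "(let \<mu> = (\<lambda>i. integral\<^sup>L M (B i));
          \<alpha> = 1 / sqrt (2 * \<omega>) * sqrt (exp ((s (n - 1))\<^sup>2) - 1);
          x = (\<lambda>i. (1 + \<alpha>) * \<mu> i);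
          q = QZ (1 - \<omega>) - s 1
      in cost M B n id x \<omega> /
           (INF (\<tau>, y) \<in> {(\<tau>, y). \<tau> permutes {1..n} \<and> (\<forall>j\<in>{1..n}. 0 \<le> y j)}. cost M B n \<tau> y \<omega>)
         \<le> 2 * \<omega> * \<alpha> /
           ((1 - \<omega>) * measure std_normal {q..} - \<omega> * measure std_normal {..q}))"
proof -
  interpret prob_space M
    by (rule assms(1))
  obtain N where n: "n = Suc N" and N: "0 < N"
    using assms(2) by (intro that[of "n - 1"]) auto
  note hyps = assms(5-8)[unfolded n]
  define \<alpha> where "\<alpha> = 1 / sqrt (2 * \<omega>) * sqrt (exp ((s N)\<^sup>2) - 1)"
  define q where "q = QZ (1 - \<omega>) - s 1"
  define S where "S = (\<Sum>k<N. exp (m (Suc k) + (s (Suc k))\<^sup>2 / 2))"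
  have "0 < s 1"
    using hyps(2)[of 1] by (simp add: lognormal_def)
  then have D: "0 < (1 - \<omega>) - Phi q"
    unfolding q_def using Phi_QZ_diff_less[of "s 1" "1 - \<omega>"] assms(3,4) by simp
  have "0 < S"
    unfolding S_def using N by (intro sum_pos) auto
  have UB: "cost M B (Suc N) id (\<lambda>i. (1 + \<alpha>) * expectation (B i)) \<omega> \<le> 2 * \<omega> * \<alpha> * S"
    unfolding \<alpha>_def S_def using hyps N assms(3) by (rule cost_id_lognormal_le)
  have LB: "((1 - \<omega>) - Phi q) * S
      \<le> (INF (\<tau>, y) \<in> {(\<tau>, y). \<tau> permutes {1..Suc N} \<and> (\<forall>j\<in>{1..Suc N}. 0 \<le> y j)}. cost M B (Suc N) \<tau> y \<omega>)"
    unfolding q_def S_def using hyps assms(3,4) by (rule INF_cost_lognormal_ge)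
  have "(1 - \<omega>) * measure std_normal {q..} - \<omega> * measure std_normal {..q} = (1 - \<omega>) - Phi q"
    by (simp add: measure_std_normal_atLeast cdf_def algebra_simps)
  with divide_le_divide_of_bounds[OF UB LB D \<open>0 < S\<close>] assms(3) show ?thesis
    unfolding Let_def \<alpha>_def q_def n by simp
qed

end
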